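(* Fix $a>0$ and let $q\to0^+$. Let $x_0$ be the solution of $e^{-x_0}x_0^{a}=q\,\Gamma(a)$ with $x_0\to\infty$ as $q\to0^+$, and let $x$ be the solution of $Q(a,x)=q$. Put $L=\ln x_0$ and $b=1-a$, and $$d_1=L-1,\qquad d_2=\tfrac12\bigl(3b-2bL+L^2-2L+2\bigr),$$ $$d_3=\tfrac16\bigl(24bL-11b^2-24b-6L^2+12L-12-9bL^2+6b^2L+2L^3\bigr),$$ $$d_4=\tfrac1{12}\bigl(72+36L^2+3L^4-72L+162b-168bL-12L^3+25b^3-22bL^3+36b^2L^2-12b^3L+84bL^2+120b^2-114b^2L\bigr).$$ Then for each $K\in\{1,2,3,4\}$, $$x=x_0-L+b\sum_{k=1}^{K}\frac{d_k}{x_0^k}+o\bigl(x_0^{-K}\bigr)\qquad(q\to0^+).$$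
   Context: $Q(a,x)=\frac{1}{\Gamma(a)}\int_x^\infty t^{a-1}e^{-t}\,dt$ for $a>0$, $x>0$ (the regularized upper incomplete gamma function), which has the asymptotic expansion $Q(a,x)\sim\frac{x^{a-1}e^{-x}}{\Gamma(a)}\sum_{n\ge0}\frac{(-1)^n(1-a)_n}{x^n}$ as $x\to\infty$, with $(c)_n=\Gamma(c+n)/\Gamma(c)$. *)

theory Defs
  imports "HOL-Analysis.Analysis" "HOL-Library.Landau_Symbols"
begin

definition Q_inc :: "real \<Rightarrow> real \<Rightarrow> real" where
  "Q_inc a x = integral {x..} (\<lambda>t. t powr (a - 1) * exp (- t)) / Gamma a"

definition dcoef :: "real \<Rightarrow> real \<Rightarrow> nat \<Rightarrow> real" where
  "dcoef b L k =
    (if k = 1 then L - 1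
     else if k = 2 then (3*b - 2*b*L + L^2 - 2*L + 2) / 2
     else if k = 3 then (24*b*L - 11*b^2 - 24*b - 6*L^2 + 12*L - 12 - 9*b*L^2
                         + 6*b^2*L + 2*L^3) / 6
     else if k = 4 then (72 + 36*L^2 + 3*L^4 - 72*L + 162*b - 168*b*L - 12*L^3
                         + 25*b^3 - 22*b*L^3 + 36*b^2*L^2 - 12*b^3*L + 84*b*L^2
                         + 120*b^2 - 114*b^2*L) / 12
     else 0)"

end

theory Submission
  imports Defs "HOL-Real_Asymp.Real_Asymp"
begin

text \<open>
  Repeated integration by parts gives, for the tail integral,
  Gamma(a) Q(a,y) = e^-y y^(a-1) (P(1/y) + O(y^-5)), where P is the five-term truncation of
  the asymptotic series. Taking logarithms, the equations defining x and x0 combine to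
  H(x) = a ln x0 - x0 + O(x^-5) with H(y) = -y - (1-a) ln y + ln P(1/y). The explicit
  candidate Y = x0 - L + b (d1/x0 + ... + d4/x0^4) solves the same equation up to o(x0^-4).
  Since H' tends to -1, eventually |u - v| <= 2 |H u - H v|, so x - Y = o(x0^-4); dropping
  the terms of Y beyond order K costs only o(x0^-K).
\<close>

lemma abs_ln_diff_le:
  fixes u v m :: real
  assumes "0 < m" "m \<le> u" "m \<le> v"
  shows "\<bar>ln u - ln v\<bar> \<le> \<bar>u - v\<bar> / m"
proof -
  have "ln p - ln q \<le> \<bar>p - q\<bar> / m" if "m \<le> p" "m \<le> q" for p q :: real
  proof -
    have "ln p - ln q = ln (p / q)"
      using that assms(1) by (simp add: ln_div)
    also have "\<dots> \<le> p / q - 1"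
      using that assms(1) by (intro ln_le_minus_one) simp
    also have "\<dots> = (p - q) / q"
      using that assms(1) by (simp add: field_simps)
    also have "\<dots> \<le> \<bar>p - q\<bar> / q"
      using that assms(1) by (intro divide_right_mono) auto
    also have "\<dots> \<le> \<bar>p - q\<bar> / m"
      using that assms(1) by (intro divide_left_mono) auto
    finally show ?thesis .
  qed
  from this [OF assms(2,3)] this [OF assms(3,2)] show ?thesis
    by (simp add: abs_le_iff abs_minus_commute)
qed

lemma expanding_of_deriv_le_neg:
  fixes f f' :: "real \<Rightarrow> real"
  assumes deriv: "\<And>z. Z \<le> z \<Longrightarrow> (f has_real_derivative f' z) (at z)"
    and bound: "\<And>z. Z \<le> z \<Longrightarrow> f' z \<le> - c"
    and "Z \<le> u" "Z \<le> v"
  shows "c * \<bar>u - v\<bar> \<le> \<bar>f u - f v\<bar>"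
proof -
  have "c * (v - u) \<le> f u - f v" if "Z \<le> u" "u \<le> v" for u v
  proof (cases "u = v")
    case False
    with that have "u < v" by simp
    have "\<exists>z>u. z < v \<and> f v - f u = (v - u) * f' z"
      using that by (intro MVT2 [OF \<open>u < v\<close>] deriv) simp
    then obtain z where z: "u < z" "z < v" "f v - f u = (v - u) * f' z"
      by blast
    have "(v - u) * f' z \<le> (v - u) * (- c)"
      using bound [of z] that z by (intro mult_left_mono) auto
    with z show ?thesis by (simp add: algebra_simps)
  qed simp
  then have "c * \<bar>u - v\<bar> \<le> f u - f v \<or> c * \<bar>u - v\<bar> \<le> f v - f u"
    using assms(3,4) by (cases "u \<le> v") (auto simp: abs_minus_commute)
  then show ?thesis
    by linarith
qed

lemma inverse_power_bigo_mono:
  assumes "K \<le> m"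
  shows "(\<lambda>t::real. 1 / t ^ m) \<in> O(\<lambda>t. 1 / t ^ K)"
proof (intro landau_o.bigI [where c = 1])
  show "eventually (\<lambda>t::real. norm (1 / t ^ m) \<le> 1 * norm (1 / t ^ K)) at_top"
    using eventually_ge_at_top [of "1::real"]
  proof eventually_elim
    case (elim t)
    then have "t ^ K \<le> t ^ m"
      using assms by (intro power_increasing) auto
    then show ?case
      using elim by (simp add: frac_le)
  qed
qed simp

lemma smallo_diff_of_expanding:
  fixes H :: "real \<Rightarrow> real" and y Y G :: "'a \<Rightarrow> real"
  assumes expanding: "\<And>u v. Z \<le> u \<Longrightarrow> Z \<le> v \<Longrightarrow> \<bar>u - v\<bar> \<le> c * \<bar>H u - H v\<bar>"
    and "filterlim y at_top F" "filterlim Y at_top F"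
    and "(\<lambda>q. G q - H (y q)) \<in> o[F](g)" "(\<lambda>q. H (Y q) - G q) \<in> o[F](g)"
  shows "(\<lambda>q. y q - Y q) \<in> o[F](g)"
proof -
  have "eventually (\<lambda>q. Z \<le> y q \<and> Z \<le> Y q) F"
    using assms(2,3) unfolding filterlim_at_top by (intro eventually_conj) auto
  then have "(\<lambda>q. y q - Y q) \<in> O[F](\<lambda>q. (G q - H (y q)) + (H (Y q) - G q))"
  proof (intro bigoI [where c = c], elim eventually_mono, clarify)
    fix q assume "Z \<le> y q" "Z \<le> Y q"
    from expanding [OF this] show "norm (y q - Y q) \<le> c * norm (G q - H (y q) + (H (Y q) - G q))"
      by (simp add: abs_minus_commute)
  qed
  then show ?thesis
    using assms(4,5) by (rule landau_o.big_small_trans [OF _ sum_in_smallo(1)])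
qed

lemma inverse_power_bigo_of_half_le:
  fixes y t :: "'a \<Rightarrow> real"
  assumes "eventually (\<lambda>q. 0 < t q \<and> t q / 2 \<le> y q) F"
  shows "(\<lambda>q. 1 / y q ^ n) \<in> O[F](\<lambda>q. 1 / t q ^ n)"
  using assms
proof (intro bigoI [where c = "2 ^ n"], elim eventually_mono, clarify)
  fix q assume q: "0 < t q" "t q / 2 \<le> y q"
  have "1 / y q ^ n \<le> 1 / (t q / 2) ^ n"
    using q by (intro divide_left_mono power_mono) auto
  then show "norm (1 / y q ^ n) \<le> 2 ^ n * norm (1 / t q ^ n)"
    using q by (simp add: power_divide)
qed

section \<open>The tail integral of the incomplete gamma function\<close>

definition gamma_integrand :: "real \<Rightarrow> real \<Rightarrow> real" where
  "gamma_integrand c t = t powr (c - 1) * exp (- t)"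

lemma Q_inc_eq: "Q_inc a x = integral {x..} (gamma_integrand a) / Gamma a"
  by (simp add: Q_inc_def gamma_integrand_def [abs_def])

lemma gamma_integrand_pos: "t > 0 \<Longrightarrow> gamma_integrand c t > 0"
  by (simp add: gamma_integrand_def)

lemma gamma_integrand_integrable_on_interval:
  "x > 0 \<Longrightarrow> gamma_integrand c integrable_on {x..y}"
  unfolding gamma_integrand_def
  by (intro integrable_continuous_interval continuous_intros) auto

lemma integral_gamma_integrand_nonneg: "x > 0 \<Longrightarrow> 0 \<le> integral {x..y} (gamma_integrand c)"
  by (intro integral_nonneg gamma_integrand_integrable_on_interval less_imp_le[OF gamma_integrand_pos])
    auto

lemma gamma_integrand_shift:
  assumes "x > 0"
  shows "gamma_integrand (c - real n) x = gamma_integrand c x / x ^ n"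
  using assms by (simp add: gamma_integrand_def powr_diff powr_realpow)

lemma gamma_integrand_tendsto_0: "(gamma_integrand c \<longlongrightarrow> 0) at_top"
  unfolding gamma_integrand_def by real_asymp

lemma gamma_integrand_has_real_derivative:
  assumes "t > 0"
  shows "(gamma_integrand c has_real_derivative
           (c - 1) * gamma_integrand (c - 1) t - gamma_integrand c t) (at t)"
  unfolding gamma_integrand_def
  by (rule derivative_eq_intros refl | use assms in simp)+

lemma integral_gamma_integrand_by_parts:
  assumes "0 < x" "x \<le> y"
  shows "integral {x..y} (gamma_integrand c)
           = gamma_integrand c x - gamma_integrand c y + (c - 1) * integral {x..y} (gamma_integrand (c - 1))"
proof -
  have "((\<lambda>t. (c - 1) * gamma_integrand (c - 1) t - gamma_integrand c t)
          has_integral (gamma_integrand c y - gamma_integrand c x)) {x..y}"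
  proof (rule fundamental_theorem_of_calculus[OF assms(2)])
    fix t assume "t \<in> {x..y}"
    with assms have "t > 0" by simp
    show "(gamma_integrand c has_vector_derivative
                 (c - 1) * gamma_integrand (c - 1) t - gamma_integrand c t) (at t within {x..y})"
      using gamma_integrand_has_real_derivative [OF \<open>t > 0\<close>, of c]
      unfolding has_real_derivative_iff_has_vector_derivative
      by (rule has_vector_derivative_at_within)
  qed
  moreover have "((\<lambda>t. (c - 1) * gamma_integrand (c - 1) t - gamma_integrand c t) has_integral
      (c - 1) * integral {x..y} (gamma_integrand (c - 1)) - integral {x..y} (gamma_integrand c)) {x..y}"
    using assms(1)
    by (intro has_integral_diff has_integral_mult_right integrable_integral
        gamma_integrand_integrable_on_interval)
  ultimately show ?thesis
    by (metis (lifting) has_integral_unique eq_diff_eq' diff_diff_eq2 add.commute)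
qed

lemma integral_gamma_integrand_expansion:
  assumes "0 < x" "x \<le> y"
  shows "integral {x..y} (gamma_integrand a)
           = (\<Sum>k<n. (- 1) ^ k * pochhammer (1 - a) k
                        * (gamma_integrand (a - k) x - gamma_integrand (a - k) y))
             + (- 1) ^ n * pochhammer (1 - a) n * integral {x..y} (gamma_integrand (a - n))"
proof (induction n)
  case (Suc n)
  define p where "p = (- 1) ^ n * pochhammer (1 - a) n"
  have shift: "a - real n - 1 = a - real (Suc n)" by simp
  have parts: "integral {x..y} (gamma_integrand (a - n))
      = gamma_integrand (a - n) x - gamma_integrand (a - n) y
        + (a - Suc n) * integral {x..y} (gamma_integrand (a - Suc n))"
    using integral_gamma_integrand_by_parts [OF assms, of "a - n"] unfolding shift .
  have coeff: "p * (a - Suc n) = (- 1) ^ Suc n * pochhammer (1 - a) (Suc n)"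
    by (simp add: p_def pochhammer_Suc algebra_simps)
  have "integral {x..y} (gamma_integrand a)
      = (\<Sum>k<n. (- 1) ^ k * pochhammer (1 - a) k
                   * (gamma_integrand (a - k) x - gamma_integrand (a - k) y))
        + p * integral {x..y} (gamma_integrand (a - n))"
    using Suc.IH unfolding p_def .
  also have "\<dots> = (\<Sum>k<n. (- 1) ^ k * pochhammer (1 - a) k
                   * (gamma_integrand (a - k) x - gamma_integrand (a - k) y))
        + p * (gamma_integrand (a - n) x - gamma_integrand (a - n) y)
        + p * (a - Suc n) * integral {x..y} (gamma_integrand (a - Suc n))"
    unfolding parts by (simp only: distrib_left mult.assoc add.assoc)
  finally show ?case
    unfolding coeff by (simp add: p_def)
qed simp

lemma integral_gamma_integrand_le:
  assumes "0 < x" "2 * (c - 1) \<le> x" "x \<le> y"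
  shows "integral {x..y} (gamma_integrand c) \<le> 2 * gamma_integrand c x"
proof (cases "c \<le> 1")
  case True
  then have "(c - 1) * integral {x..y} (gamma_integrand (c - 1)) \<le> 0"
    using integral_gamma_integrand_nonneg [OF assms(1)] by (simp add: mult_nonpos_nonneg)
  then show ?thesis
    using integral_gamma_integrand_by_parts [OF assms(1,3), of c] assms
      gamma_integrand_pos [of x c] gamma_integrand_pos [of y c] by linarith
next
  case False
  have "integral {x..y} (gamma_integrand (c - 1)) \<le> integral {x..y} (\<lambda>t. gamma_integrand c t / x)"
    using assms gamma_integrand_shift [of _ c 1]
    by (intro integral_le gamma_integrand_integrable_on_interval integrable_on_divide)
      (auto simp: divide_left_mono gamma_integrand_pos less_imp_le)
  then have "(c - 1) * integral {x..y} (gamma_integrand (c - 1))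
               \<le> (c - 1) / x * integral {x..y} (gamma_integrand c)"
    using False mult_left_mono [of _ _ "c - 1"] by fastforce
  also have "\<dots> \<le> 1 / 2 * integral {x..y} (gamma_integrand c)"
    using assms(1,2) integral_gamma_integrand_nonneg [OF assms(1)]
    by (intro mult_right_mono) (auto simp: field_simps)
  finally show ?thesis
    using integral_gamma_integrand_by_parts [OF assms(1,3), of c] gamma_integrand_pos [of y c] assms
    by linarith
qed

lemma gamma_integrand_tail:
  assumes "0 < x" "2 * (c - 1) \<le> x"
  shows "gamma_integrand c integrable_on {x..}"
    and "((\<lambda>y. integral {x..y} (gamma_integrand c)) \<longlongrightarrow> integral {x..} (gamma_integrand c)) at_top"
    and "integral {x..} (gamma_integrand c) \<le> 2 * gamma_integrand c x"
proof -
  define J where "J y = integral {x..y} (gamma_integrand c)" for y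
  have "mono J"
  proof (rule monoI)
    fix y z :: real
    assume "y \<le> z"
    then show "J y \<le> J z"
      unfolding J_def using assms(1)
      by (intro integral_subset_le)
        (auto simp: gamma_integrand_integrable_on_interval intro!: less_imp_le [OF gamma_integrand_pos])
  qed
  have J_le: "J y \<le> 2 * gamma_integrand c x" for y
  proof (cases "x \<le> y")
    case True
    then show ?thesis unfolding J_def by (rule integral_gamma_integrand_le [OF assms])
  next
    case False
    then show ?thesis using gamma_integrand_pos [OF assms(1), of c] by (simp add: J_def)
  qed
  have "(\<lambda>n. J (real n)) \<longlonglongrightarrow> (SUP n. J (real n))"
  proof (rule LIMSEQ_incseq_SUP)
    show "bdd_above (range (\<lambda>n. J (real n)))"
      using J_le by (intro bdd_aboveI [where M = "2 * gamma_integrand c x"]) auto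
    show "incseq (\<lambda>n. J (real n))"
      using \<open>mono J\<close> by (auto simp: incseq_def intro: monoD)
  qed
  then have J_lim: "(J \<longlongrightarrow> (SUP n. J (real n))) at_top"
    by (rule tendsto_at_topI_sequentially_real [OF \<open>mono J\<close>])
  have "(gamma_integrand c has_integral (SUP n. J (real n))) {x..}"
  proof (rule has_integral_to_inf)
    show "gamma_integrand c integrable_on {x..y}" for y
      using assms(1) by (rule gamma_integrand_integrable_on_interval)
    show "((\<lambda>y. integral {x..y} (gamma_integrand c)) \<longlongrightarrow> (SUP n. J (real n))) at_top"
      using J_lim unfolding J_def .
    show "0 \<le> gamma_integrand c y" if "x \<le> y" for y
      using assms(1) that by (intro less_imp_le [OF gamma_integrand_pos]) auto
  qed
  then show "gamma_integrand c integrable_on {x..}"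
    and lim: "(J \<longlongrightarrow> integral {x..} (gamma_integrand c)) at_top"
    using J_lim by (auto simp: integral_unique)
  show "integral {x..} (gamma_integrand c) \<le> 2 * gamma_integrand c x"
    using lim J_le by (intro tendsto_upperbound [of J]) auto
qed

lemma gamma_integrand_integrable_tail:
  assumes "0 < x"
  shows "gamma_integrand c integrable_on {x..}"
proof (rule integrable_Un')
  define M where "M = max x (2 * (c - 1))"
  show "gamma_integrand c integrable_on {x..M}"
    using assms by (rule gamma_integrand_integrable_on_interval)
  show "gamma_integrand c integrable_on {M..}"
    using assms by (intro gamma_integrand_tail(1)) (auto simp: M_def)
  have "{x..M} \<inter> {M..} = {M}"
    by (auto simp: M_def)
  then show "negligible ({x..M} \<inter> {M..})" by simp
  show "{x..} = {x..M} \<union> {M..}"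
    by (auto simp: M_def)
qed

definition gamma_tail_poly :: "real \<Rightarrow> nat \<Rightarrow> real \<Rightarrow> real" where
  "gamma_tail_poly b n w = (\<Sum>k<n. (- 1) ^ k * pochhammer b k * w ^ k)"

lemma gamma_tail_expansion:
  assumes "0 < x" "2 * (a - 1) \<le> x"
  shows "integral {x..} (gamma_integrand a)
           = gamma_integrand a x * gamma_tail_poly (1 - a) n (1 / x)
             + (- 1) ^ n * pochhammer (1 - a) n * integral {x..} (gamma_integrand (a - n))"
proof -
  define c where "c k = (- 1) ^ k * pochhammer (1 - a) k" for k
  have tail_n: "2 * (a - n - 1) \<le> x"
    using assms(2) by simp
  have "((\<lambda>y. (\<Sum>k<n. c k * (gamma_integrand (a - k) x - gamma_integrand (a - k) y))
                + c n * integral {x..y} (gamma_integrand (a - n)))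
        \<longlongrightarrow> (\<Sum>k<n. c k * (gamma_integrand (a - k) x - 0)) + c n * integral {x..} (gamma_integrand (a - n)))
        at_top"
    using assms(1) tail_n
    by (intro tendsto_intros gamma_integrand_tendsto_0 gamma_integrand_tail(2))
  moreover have "eventually (\<lambda>y. integral {x..y} (gamma_integrand a)
      = (\<Sum>k<n. c k * (gamma_integrand (a - k) x - gamma_integrand (a - k) y))
        + c n * integral {x..y} (gamma_integrand (a - n))) at_top"
    using eventually_ge_at_top [of x]
    by eventually_elim (use integral_gamma_integrand_expansion [OF assms(1)] in \<open>simp add: c_def\<close>)
  ultimately have "((\<lambda>y. integral {x..y} (gamma_integrand a))
      \<longlongrightarrow> (\<Sum>k<n. c k * gamma_integrand (a - k) x) + c n * integral {x..} (gamma_integrand (a - n)))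
      at_top"
    by (simp add: tendsto_cong)
  moreover have "((\<lambda>y. integral {x..y} (gamma_integrand a)) \<longlongrightarrow> integral {x..} (gamma_integrand a)) at_top"
    using assms by (rule gamma_integrand_tail(2))
  ultimately have "integral {x..} (gamma_integrand a)
      = (\<Sum>k<n. c k * gamma_integrand (a - k) x) + c n * integral {x..} (gamma_integrand (a - n))"
    using tendsto_unique [OF trivial_limit_at_top_linorder] by blast
  also have "(\<Sum>k<n. c k * gamma_integrand (a - k) x) = gamma_integrand a x * gamma_tail_poly (1 - a) n (1 / x)"
    using assms(1)
    by (simp add: gamma_tail_poly_def sum_distrib_left gamma_integrand_shift c_def power_one_over
        mult_ac)
  finally show ?thesis
    by (simp add: c_def)
qed

lemma gamma_tail_ratio_bound:
  assumes "0 < x" "2 * (a - 1) \<le> x"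
  shows "\<bar>integral {x..} (gamma_integrand a) / gamma_integrand a x - gamma_tail_poly (1 - a) n (1 / x)\<bar>
           \<le> 2 * \<bar>pochhammer (1 - a) n\<bar> / x ^ n"
proof -
  define R where "R = integral {x..} (gamma_integrand (a - n))"
  have g: "gamma_integrand a x > 0"
    using assms(1) by (rule gamma_integrand_pos)
  have "2 * (a - n - 1) \<le> x"
    using assms(2) by simp
  then have R_le: "R \<le> 2 * (gamma_integrand a x / x ^ n)"
    using gamma_integrand_tail(3) [OF assms(1), of "a - n"] gamma_integrand_shift [OF assms(1), of a n]
    by (simp add: R_def)
  have R_nonneg: "0 \<le> R"
    unfolding R_def using assms(1)
    by (intro integral_nonneg gamma_integrand_integrable_tail less_imp_le [OF gamma_integrand_pos])
      auto
  have "integral {x..} (gamma_integrand a) / gamma_integrand a x - gamma_tail_poly (1 - a) n (1 / x)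
          = (- 1) ^ n * pochhammer (1 - a) n * (R / gamma_integrand a x)"
    using gamma_tail_expansion [OF assms, of n] g by (simp add: R_def field_simps)
  also have "\<bar>\<dots>\<bar> = \<bar>pochhammer (1 - a) n\<bar> * (R / gamma_integrand a x)"
    using R_nonneg g by (simp add: abs_mult)
  also have "\<dots> \<le> \<bar>pochhammer (1 - a) n\<bar> * (2 / x ^ n)"
    using R_le g by (intro mult_left_mono) (auto simp: field_simps)
  finally show ?thesis by (simp add: mult.commute)
qed

lemma gamma_tail_ratio_tendsto_1:
  "((\<lambda>x. integral {x..} (gamma_integrand a) / gamma_integrand a x) \<longlongrightarrow> 1) at_top"
proof -
  have "eventually (\<lambda>x. norm (integral {x..} (gamma_integrand a) / gamma_integrand a x - 1)
                          \<le> 2 * \<bar>1 - a\<bar> / x) at_top"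
    using eventually_gt_at_top [of 0] eventually_ge_at_top [of "2 * (a - 1)"]
    by eventually_elim (use gamma_tail_ratio_bound [of _ a 1] in \<open>simp add: gamma_tail_poly_def\<close>)
  moreover have "((\<lambda>x::real. 2 * \<bar>1 - a\<bar> / x) \<longlongrightarrow> 0) at_top"
    by real_asymp
  ultimately have "((\<lambda>x. integral {x..} (gamma_integrand a) / gamma_integrand a x - 1) \<longlongrightarrow> 0) at_top"
    by (rule Lim_null_comparison)
  then show ?thesis
    by (simp add: LIM_zero_iff)
qed

lemma filterlim_inverse_Q_inc:
  assumes "a > 0" and x_eq: "eventually (\<lambda>q. x q > 0 \<and> Q_inc a (x q) = q) (at_right 0)"
  shows "filterlim x at_top (at_right 0)"
  unfolding filterlim_at_top
proof
  fix Z :: real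
  have "eventually (\<lambda>y. integral {y..} (gamma_integrand a) / gamma_integrand a y > 0) at_top"
    using gamma_tail_ratio_tendsto_1 by (rule order_tendstoD) simp
  moreover note eventually_ge_at_top [of Z] eventually_gt_at_top [of 0]
  ultimately have "eventually (\<lambda>y. integral {y..} (gamma_integrand a) > 0 \<and> Z \<le> y \<and> 0 < y) at_top"
    by eventually_elim (auto simp: zero_less_divide_iff dest: gamma_integrand_pos [of _ a])
  then obtain M where M: "integral {M..} (gamma_integrand a) > 0" "Z \<le> M" "0 < M"
    by (auto simp: eventually_at_top_linorder)
  have "eventually (\<lambda>q. q * Gamma a < integral {M..} (gamma_integrand a)) (at_right 0)"
    using M(1) Gamma_real_pos [OF assms(1)]
    by (intro order_tendstoD(2) [of "\<lambda>q. q * Gamma a" 0]) (auto intro!: tendsto_eq_intros)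
  then show "eventually (\<lambda>q. Z \<le> x q) (at_right 0)"
    using x_eq
  proof eventually_elim
    case (elim q)
    show "Z \<le> x q"
    proof (rule ccontr)
      assume "\<not> Z \<le> x q"
      then have "integral {M..} (gamma_integrand a) \<le> integral {x q..} (gamma_integrand a)"
        using elim M
        by (intro integral_subset_le gamma_integrand_integrable_tail)
          (auto intro!: less_imp_le [OF gamma_integrand_pos])
      also have "\<dots> = q * Gamma a"
        using elim Gamma_real_pos [OF assms(1)] by (auto simp: Q_inc_eq field_simps)
      finally show False
        using elim by simp
    qed
  qed
qed

section \<open>The logarithmic equation\<close>

definition gamma_tail_poly_deriv :: "real \<Rightarrow> nat \<Rightarrow> real \<Rightarrow> real" where
  "gamma_tail_poly_deriv b n w = (\<Sum>k<n. (- 1) ^ k * pochhammer b k * (of_nat k * w ^ (k - 1)))"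

lemma gamma_tail_poly_has_real_derivative:
  "(gamma_tail_poly b n has_real_derivative gamma_tail_poly_deriv b n w) (at w)"
  unfolding gamma_tail_poly_def [abs_def] gamma_tail_poly_deriv_def
  by (auto intro!: derivative_eq_intros sum.cong)

lemma gamma_tail_poly_at_inverse_tendsto:
  assumes "n \<ge> 1"
  shows "((\<lambda>z. gamma_tail_poly b n (1 / z)) \<longlongrightarrow> 1) at_top"
proof -
  have "((\<lambda>z::real. 1 / z) \<longlongrightarrow> 0) at_top"
    by real_asymp
  then have "((\<lambda>z. gamma_tail_poly b n (1 / z)) \<longlongrightarrow> gamma_tail_poly b n 0) at_top"
    unfolding gamma_tail_poly_def by (intro tendsto_intros)
  also have "gamma_tail_poly b n 0 = 1"
    using assms by (simp add: gamma_tail_poly_def power_0_left if_distrib sum.If_cases)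
  finally show ?thesis .
qed

lemma gamma_tail_poly_inverse_has_real_derivative:
  assumes "z \<noteq> 0"
  shows "((\<lambda>z. gamma_tail_poly b n (1 / z)) has_real_derivative
           gamma_tail_poly_deriv b n (1 / z) * (- 1 / z ^ 2)) (at z)"
proof -
  have "((\<lambda>z. 1 / z) has_real_derivative - 1 / z ^ 2) (at z)"
    using assms by (auto intro!: derivative_eq_intros simp: power2_eq_square)
  then show ?thesis
    by (rule DERIV_chain2 [OF gamma_tail_poly_has_real_derivative])
qed

(* For b = 1 - a this is the logarithm of the n-term approximation of Gamma a * Q_inc a z. *)
definition log_tail_approx :: "real \<Rightarrow> nat \<Rightarrow> real \<Rightarrow> real" where
  "log_tail_approx b n z = - z - b * ln z + ln (gamma_tail_poly b n (1 / z))"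

lemma log_tail_approx_has_real_derivative:
  assumes "z > 0" "gamma_tail_poly b n (1 / z) > 0"
  shows "(log_tail_approx b n has_real_derivative
            - 1 - b / z - gamma_tail_poly_deriv b n (1 / z) / (gamma_tail_poly b n (1 / z) * z ^ 2))
         (at z)"
proof -
  have "((\<lambda>z. - z - b * ln z) has_real_derivative - 1 - b / z) (at z)"
    using assms(1) by (auto intro!: derivative_eq_intros)
  moreover have "((\<lambda>z. ln (gamma_tail_poly b n (1 / z))) has_real_derivative
          1 / gamma_tail_poly b n (1 / z) * (gamma_tail_poly_deriv b n (1 / z) * (- 1 / z ^ 2))) (at z)"
    using assms by (intro DERIV_chain2 [OF DERIV_ln_divide gamma_tail_poly_inverse_has_real_derivative]) auto
  ultimately have "(log_tail_approx b n has_real_derivative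
          - 1 - b / z + 1 / gamma_tail_poly b n (1 / z) * (gamma_tail_poly_deriv b n (1 / z) * (- 1 / z ^ 2)))
        (at z)"
    unfolding log_tail_approx_def [abs_def] by (rule DERIV_add)
  then show ?thesis
    by (rule DERIV_cong) simp
qed

lemma log_tail_approx_expanding:
  assumes "n \<ge> 1"
  obtains Z where "\<And>u v. Z \<le> u \<Longrightarrow> Z \<le> v
                     \<Longrightarrow> \<bar>u - v\<bar> \<le> 2 * \<bar>log_tail_approx b n u - log_tail_approx b n v\<bar>"
proof -
  define D where "D z = - 1 - b / z - gamma_tail_poly_deriv b n (1 / z) / (gamma_tail_poly b n (1 / z) * z ^ 2)"
    for z
  have inv: "((\<lambda>z::real. 1 / z) \<longlongrightarrow> 0) at_top"
    by real_asymp
  have P: "((\<lambda>z. gamma_tail_poly b n (1 / z)) \<longlongrightarrow> 1) at_top"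
    using assms by (rule gamma_tail_poly_at_inverse_tendsto)
  have "((\<lambda>z. - 1 - b * (1 / z) - gamma_tail_poly_deriv b n (1 / z) * (1 / z) ^ 2 / gamma_tail_poly b n (1 / z))
         \<longlongrightarrow> - 1 - b * 0 - gamma_tail_poly_deriv b n 0 * 0 ^ 2 / 1) at_top"
    unfolding gamma_tail_poly_deriv_def by (intro tendsto_intros inv P) simp
  then have "eventually (\<lambda>z. - 1 - b * (1 / z) - gamma_tail_poly_deriv b n (1 / z) * (1 / z) ^ 2
                                / gamma_tail_poly b n (1 / z) < - 1 / 2) at_top"
    by (rule order_tendstoD) simp
  moreover have "eventually (\<lambda>z. gamma_tail_poly b n (1 / z) > 0) at_top"
    using P by (rule order_tendstoD) simp
  ultimately have "eventually (\<lambda>z. z > 0 \<and> gamma_tail_poly b n (1 / z) > 0 \<and> D z \<le> - 1 / 2) at_top"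
    using eventually_gt_at_top [of 0]
    by eventually_elim (auto simp: D_def power2_eq_square field_simps)
  then obtain Z where Z: "\<And>z. Z \<le> z \<Longrightarrow> z > 0 \<and> gamma_tail_poly b n (1 / z) > 0 \<and> D z \<le> - 1 / 2"
    unfolding eventually_at_top_linorder by blast
  show ?thesis
  proof (rule that)
    fix u v assume "Z \<le> u" "Z \<le> v"
    have "1 / 2 * \<bar>u - v\<bar> \<le> \<bar>log_tail_approx b n u - log_tail_approx b n v\<bar>"
    proof (rule expanding_of_deriv_le_neg [OF _ _ \<open>Z \<le> u\<close> \<open>Z \<le> v\<close>])
      show "(log_tail_approx b n has_real_derivative D z) (at z)" if "Z \<le> z" for z
        unfolding D_def using Z [OF that] by (intro log_tail_approx_has_real_derivative) auto
      show "D z \<le> - (1 / 2)" if "Z \<le> z" for z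
        using Z [OF that] by simp
    qed
    then show "\<bar>u - v\<bar> \<le> 2 * \<bar>log_tail_approx b n u - log_tail_approx b n v\<bar>"
      by simp
  qed
qed

lemma ln_gamma_tail_bigo:
  assumes "n \<ge> 1"
  shows "(\<lambda>x. ln (integral {x..} (gamma_integrand a)) - log_tail_approx (1 - a) n x) \<in> O(\<lambda>x. 1 / x ^ n)"
proof (rule bigoI)
  define C where "C = 2 * \<bar>pochhammer (1 - a) n\<bar>"
  define r where "r x = integral {x..} (gamma_integrand a) / gamma_integrand a x" for x
  define P where "P x = gamma_tail_poly (1 - a) n (1 / x)" for x
  have "eventually (\<lambda>x. r x > 1 / 2) at_top"
    unfolding r_def using gamma_tail_ratio_tendsto_1 by (rule order_tendstoD) simp
  moreover have "eventually (\<lambda>x. P x > 1 / 2) at_top"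
    unfolding P_def using gamma_tail_poly_at_inverse_tendsto [OF assms] by (rule order_tendstoD) simp
  ultimately show "eventually (\<lambda>x. norm (ln (integral {x..} (gamma_integrand a)) - log_tail_approx (1 - a) n x)
                     \<le> 2 * C * norm (1 / x ^ n)) at_top"
    using eventually_gt_at_top [of 0] eventually_ge_at_top [of "2 * (a - 1)"]
  proof eventually_elim
    case (elim x)
    have g: "gamma_integrand a x > 0"
      using elim by (intro gamma_integrand_pos) simp
    have "integral {x..} (gamma_integrand a) > 0"
      using g elim by (simp add: r_def field_simps)
    then have "ln (integral {x..} (gamma_integrand a)) = ln (gamma_integrand a x) + ln (r x)"
      using g by (simp add: r_def ln_div)
    then have "ln (integral {x..} (gamma_integrand a)) - log_tail_approx (1 - a) n x = ln (r x) - ln (P x)"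
      using elim by (simp add: log_tail_approx_def P_def gamma_integrand_def ln_mult ln_powr algebra_simps)
    also have "\<bar>\<dots>\<bar> \<le> \<bar>r x - P x\<bar> / (1 / 2)"
      using elim by (intro abs_ln_diff_le) auto
    also have "\<dots> \<le> 2 * (C / x ^ n)"
      using gamma_tail_ratio_bound [of x a n] elim by (simp add: r_def P_def C_def)
    finally show ?case
      using elim by simp
  qed
qed

section \<open>The explicit expansion\<close>

definition inverse_expansion :: "real \<Rightarrow> nat \<Rightarrow> real \<Rightarrow> real" where
  "inverse_expansion b K t = t - ln t + b * (\<Sum>k=1..K. dcoef b (ln t) k / t ^ k)"

lemma inverse_expansion_4:
  "inverse_expansion b 4 t = t - ln t + b * (dcoef b (ln t) 1 / t + dcoef b (ln t) 2 / t ^ 2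
     + dcoef b (ln t) 3 / t ^ 3 + dcoef b (ln t) 4 / t ^ 4)"
  by (simp add: inverse_expansion_def eval_nat_numeral)

(* Products instead of powers: this is the form in which real_asymp can expand them. *)
lemma dcoef_eqs:
  "dcoef b L 1 = L - 1"
  "dcoef b L 2 = (3*b - 2*b*L + L*L - 2*L + 2) / 2"
  "dcoef b L 3 = (24*b*L - 11*(b*b) - 24*b - 6*(L*L) + 12*L - 12 - 9*b*(L*L) + 6*(b*b)*L
                  + 2*(L*L*L)) / 6"
  "dcoef b L 4 = (72 + 36*(L*L) + 3*(L*L*L*L) - 72*L + 162*b - 168*b*L - 12*(L*L*L) + 25*(b*b*b)
                  - 22*b*(L*L*L) + 36*(b*b)*(L*L) - 12*(b*b*b)*L + 84*b*(L*L) + 120*(b*b)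
                  - 114*(b*b)*L) / 12"
  by (simp_all add: dcoef_def power2_eq_square power3_eq_cube power4_eq_xxxx)

lemma dcoef_term_smallo:
  assumes "k \<ge> 1"
  shows "(\<lambda>t. dcoef b (ln t) k / t ^ k) \<in> o(\<lambda>t. 1 / t ^ (k - 1))"
proof -
  consider "k = 1" | "k = 2" | "k = 3" | "k = 4" | "k > 4"
    using assms by linarith
  then show ?thesis
  proof cases
    case 1
    then show ?thesis by (simp add: dcoef_def) real_asymp
  next
    case 2
    then show ?thesis by (simp add: dcoef_eqs) real_asymp
  next
    case 3
    then show ?thesis by (simp add: dcoef_eqs) real_asymp
  next
    case 4
    then show ?thesis by (simp add: dcoef_eqs) real_asymp
  next
    case 5
    then show ?thesis by (simp add: dcoef_def)
  qed
qed

lemma inverse_expansion_truncation: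
  assumes "K \<le> 4"
  shows "(\<lambda>t. inverse_expansion b 4 t - inverse_expansion b K t) \<in> o(\<lambda>t. 1 / t ^ K)"
proof -
  have split: "{1..4} = {1..K} \<union> {Suc K..4}"
    using assms by auto
  have "(\<lambda>t. \<Sum>k=Suc K..4. dcoef b (ln t) k / t ^ k) \<in> o(\<lambda>t. 1 / t ^ K)"
  proof (rule big_sum_in_smallo)
    fix k assume "k \<in> {Suc K..4}"
    then show "(\<lambda>t. dcoef b (ln t) k / t ^ k) \<in> o(\<lambda>t. 1 / t ^ K)"
      by (intro landau_o.small_big_trans [OF dcoef_term_smallo inverse_power_bigo_mono]) auto
  qed
  then have "(\<lambda>t. b * (\<Sum>k=Suc K..4. dcoef b (ln t) k / t ^ k)) \<in> o(\<lambda>t. 1 / t ^ K)"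
    by (cases "b = 0") simp_all
  moreover have "inverse_expansion b 4 t - inverse_expansion b K t
                   = b * (\<Sum>k=Suc K..4. dcoef b (ln t) k / t ^ k)" for t
    unfolding inverse_expansion_def split by (subst sum.union_disjoint) (auto simp: algebra_simps)
  ultimately show ?thesis
    by simp
qed

lemma inverse_expansion_ge:
  "eventually (\<lambda>t. t / 2 + 1 \<le> inverse_expansion b 4 t) at_top"
  unfolding inverse_expansion_4 dcoef_eqs by real_asymp

lemma gamma_tail_poly_5:
  "gamma_tail_poly b 5 w
     = 1 - b * w + b * (b + 1) * w ^ 2 - b * (b + 1) * (b + 2) * w ^ 3
       + b * (b + 1) * (b + 2) * (b + 3) * w ^ 4"
  by (simp add: gamma_tail_poly_def eval_nat_numeral pochhammer_Suc algebra_simps)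

lemma log_tail_approx_inverse_expansion:
  "(\<lambda>t. log_tail_approx b 5 (inverse_expansion b 4 t) + t - (1 - b) * ln t) \<in> o(\<lambda>t. 1 / t ^ 4)"
  unfolding log_tail_approx_def gamma_tail_poly_5 inverse_expansion_4 dcoef_eqs
  by (real_asymp simp add: field_simps)

section \<open>Inverting the equation\<close>

lemma inverse_Q_inc_log_equation:
  fixes a :: real and x0 x :: "real \<Rightarrow> real"
  assumes a_pos: "a > 0"
    and x0_eq: "eventually (\<lambda>q. exp (- x0 q) * x0 q powr a = q * Gamma a) (at_right 0)"
    and x0_lim: "filterlim x0 at_top (at_right 0)"
    and x_eq: "eventually (\<lambda>q. x q > 0 \<and> Q_inc a (x q) = q) (at_right 0)"
  shows "(\<lambda>q. (a * ln (x0 q) - x0 q) - log_tail_approx (1 - a) 5 (x q))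
           \<in> O[at_right 0](\<lambda>q. 1 / x q ^ 5)"
proof -
  have "eventually (\<lambda>q. x0 q > 0) (at_right 0)"
    using x0_lim unfolding filterlim_at_top_dense by blast
  then have "eventually (\<lambda>q. ln (integral {x q..} (gamma_integrand a)) = a * ln (x0 q) - x0 q)
               (at_right 0)"
    using x0_eq x_eq
  proof eventually_elim
    case (elim q)
    have "integral {x q..} (gamma_integrand a) = q * Gamma a"
      using elim Gamma_real_pos [OF a_pos] by (auto simp: Q_inc_eq field_simps)
    also have "\<dots> = exp (- x0 q) * x0 q powr a"
      using elim by simp
    finally show ?case
      using \<open>0 < x0 q\<close> by (simp add: ln_mult ln_powr)
  qed
  then have "eventually (\<lambda>q. ln (integral {x q..} (gamma_integrand a)) - log_tail_approx (1 - a) 5 (x q)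
               = (a * ln (x0 q) - x0 q) - log_tail_approx (1 - a) 5 (x q)) (at_right 0)"
    by eventually_elim simp
  moreover have "(\<lambda>y. ln (integral {y..} (gamma_integrand a)) - log_tail_approx (1 - a) 5 y)
                   \<in> O(\<lambda>y. 1 / y ^ 5)"
    by (rule ln_gamma_tail_bigo) simp
  note landau_o.big.compose [OF this filterlim_inverse_Q_inc [OF a_pos x_eq]]
  ultimately show ?thesis
    by (rule landau_o.big.in_cong [THEN iffD1])
qed

lemma inverse_Q_inc_expansion:
  fixes a :: real and x0 x :: "real \<Rightarrow> real"
  assumes a_pos: "a > 0"
    and x0_eq: "eventually (\<lambda>q. exp (- x0 q) * x0 q powr a = q * Gamma a) (at_right 0)"
    and x0_lim: "filterlim x0 at_top (at_right 0)"
    and x_eq: "eventually (\<lambda>q. x q > 0 \<and> Q_inc a (x q) = q) (at_right 0)"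
  shows "(\<lambda>q. x q - inverse_expansion (1 - a) 4 (x0 q)) \<in> o[at_right 0](\<lambda>q. 1 / x0 q ^ 4)"
proof -
  define H where "H = log_tail_approx (1 - a) 5"
  define Y where "Y q = inverse_expansion (1 - a) 4 (x0 q)" for q
  define G where "G q = a * ln (x0 q) - x0 q" for q
  have x_lim: "filterlim x at_top (at_right 0)"
    using a_pos x_eq by (rule filterlim_inverse_Q_inc)
  have "filterlim (\<lambda>t::real. t / 2 + 1) at_top at_top"
    by real_asymp
  then have "filterlim (inverse_expansion (1 - a) 4) at_top at_top"
    using inverse_expansion_ge by (rule filterlim_at_top_mono)
  then have Y_lim: "filterlim Y at_top (at_right 0)"
    unfolding Y_def using x0_lim by (rule filterlim_compose)
  have E1: "(\<lambda>q. G q - H (x q)) \<in> O[at_right 0](\<lambda>q. 1 / x q ^ 5)"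
    unfolding G_def H_def using assms by (rule inverse_Q_inc_log_equation)
  have E2: "(\<lambda>q. H (Y q) - G q) \<in> o[at_right 0](\<lambda>q. 1 / x0 q ^ 4)"
    using landau_o.small.compose [OF log_tail_approx_inverse_expansion [of "1 - a"] x0_lim]
    by (simp add: H_def Y_def G_def algebra_simps)
  obtain Z where Z: "\<And>u v. Z \<le> u \<Longrightarrow> Z \<le> v \<Longrightarrow> \<bar>u - v\<bar> \<le> 2 * \<bar>H u - H v\<bar>"
    using log_tail_approx_expanding [of 5] unfolding H_def by auto
  have inv5: "(\<lambda>t::real. 1 / t ^ 5) \<in> o(\<lambda>_. 1)"
    and inv4: "(\<lambda>t::real. 1 / t ^ 4) \<in> o(\<lambda>_. 1)"
    and inv54: "(\<lambda>t::real. 1 / t ^ 5) \<in> o(\<lambda>t. 1 / t ^ 4)"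
    by real_asymp+
  (* A first, crude use of the inversion gives x \<ge> x0 / 2, which turns O(x^-5) into o(x0^-4). *)
  have "(\<lambda>q. x q - Y q) \<in> o[at_right 0](\<lambda>_. 1)"
    by (rule smallo_diff_of_expanding [OF Z x_lim Y_lim
          landau_o.big_small_trans [OF E1 landau_o.small.compose [OF inv5 x_lim]]
          landau_o.small_trans [OF E2 landau_o.small.compose [OF inv4 x0_lim]]])
  then have "((\<lambda>q. x q - Y q) \<longlongrightarrow> 0) (at_right 0)"
    by (auto dest: smalloD_tendsto)
  then have "eventually (\<lambda>q. x q - Y q > - 1) (at_right 0)"
    by (rule order_tendstoD) simp
  moreover have "eventually (\<lambda>q. x0 q / 2 + 1 \<le> Y q) (at_right 0)"
    unfolding Y_def using inverse_expansion_ge x0_lim by (rule eventually_compose_filterlim)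
  moreover have "eventually (\<lambda>q. x0 q > 0) (at_right 0)"
    using x0_lim unfolding filterlim_at_top_dense by blast
  ultimately have "eventually (\<lambda>q. 0 < x0 q \<and> x0 q / 2 \<le> x q) (at_right 0)"
    by eventually_elim auto
  then have "(\<lambda>q. G q - H (x q)) \<in> o[at_right 0](\<lambda>q. 1 / x0 q ^ 4)"
    using E1 inv54 [THEN landau_o.small.compose, OF x0_lim]
    by (blast intro: landau_o.big_trans landau_o.big_small_trans inverse_power_bigo_of_half_le)
  from smallo_diff_of_expanding [OF Z x_lim Y_lim this E2]
  show ?thesis
    unfolding Y_def .
qed

theorem mainTheorem6:
  fixes a :: real and x0 x :: "real \<Rightarrow> real" and K :: nat
  assumes a_pos: "a > 0"
    and x0_eq: "eventually (\<lambda>q. exp (- x0 q) * x0 q powr a = q * Gamma a) (at_right 0)"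
    and x0_lim: "filterlim x0 at_top (at_right 0)"
    and x_eq: "eventually (\<lambda>q. x q > 0 \<and> Q_inc a (x q) = q) (at_right 0)"
    and K: "K \<in> {1..4}"
  shows "(\<lambda>q. x q - (x0 q - ln (x0 q)
              + (1 - a) * (\<Sum>k=1..K. dcoef (1 - a) (ln (x0 q)) k / x0 q ^ k)))
         \<in> o[at_right 0](\<lambda>q. 1 / x0 q ^ K)"
proof -
  have "(\<lambda>q. x q - inverse_expansion (1 - a) 4 (x0 q)) \<in> o[at_right 0](\<lambda>q. 1 / x0 q ^ K)"
    using inverse_Q_inc_expansion [OF a_pos x0_eq x0_lim x_eq]
      landau_o.big.compose [OF inverse_power_bigo_mono x0_lim] K
    by (auto intro: landau_o.small_big_trans)
  moreover have "(\<lambda>q. inverse_expansion (1 - a) 4 (x0 q) - inverse_expansion (1 - a) K (x0 q))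
                   \<in> o[at_right 0](\<lambda>q. 1 / x0 q ^ K)"
    using landau_o.small.compose [OF inverse_expansion_truncation x0_lim] K by simp
  ultimately have "(\<lambda>q. x q - inverse_expansion (1 - a) K (x0 q)) \<in> o[at_right 0](\<lambda>q. 1 / x0 q ^ K)"
    by (auto dest: sum_in_smallo(1))
  then show ?thesis
    by (simp add: inverse_expansion_def)
qed

end
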